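(* Let $d\geq 2$ and let $\rho$ be a diagonal symmetric (DS) state acting on $\mathbb{C}^d\otimes\mathbb{C}^d$, with associated matrix $M(\rho)$. Then $\rho$ is PPT (i.e. its partial transpose $\rho^{T_B}$ is positive semidefinite) if and only if $M(\rho)$ is doubly non-negative.
   Context: Let $\{\ket{0},\dots,\ket{d-1}\}$ be the computational basis of $\mathbb{C}^d$. Define $\ket{D_{ii}}=\ket{ii}$ and, for $i<j$, $\ket{D_{ij}}=(\ket{ij}+\ket{ji})/\sqrt{2}$. A state $\rho$ on $\mathbb{C}^d\otimes\mathbb{C}^d$ is diagonal symmetric (DS) if $\rho=\sum_{0\le i\le j<d}p_{ij}\ket{D_{ij}}\bra{D_{ij}}$ with $p_{ij}\ge 0$ and $\sum_{i\le j}p_{ij}=1$; set $p_{ji}=p_{ij}$. Its associated matrix $M(\rho)$ is the real symmetric $d\times d$ matrix with $M(\rho)_{ii}=p_{ii}$ and $M(\rho)_{ij}=p_{ij}/2$ for $i\ne j$. The partial transpose $\rho^{T_B}$ is taken with respect to the computational basis of the second factor. A real symmetric matrix $A$ is doubly non-negative if $A\succeq 0$ and all its entries are non-negative. *)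

theory Defs
  imports Complex_Main
begin

text \<open>Vectors on C^d (x) C^d are functions on index pairs (i,j), i,j < d, where (i,j)
  stands for the computational basis vector |ij>. Operators are kernels
  (nat \<times> nat) \<Rightarrow> (nat \<times> nat) \<Rightarrow> complex, entry ((i,j),(k,l)) = <ij| A |kl>.\<close>

definition idx :: "nat \<Rightarrow> (nat \<times> nat) set" where
  "idx d = {0..<d} \<times> {0..<d}"

definition ket2 :: "nat \<Rightarrow> nat \<Rightarrow> (nat \<times> nat) \<Rightarrow> complex" where
  "ket2 i j = (\<lambda>x. if x = (i, j) then 1 else 0)"

definition Dket :: "nat \<Rightarrow> nat \<Rightarrow> (nat \<times> nat) \<Rightarrow> complex" where
  "Dket i j = (if i = j then ket2 i i
               else (\<lambda>x. (ket2 i j x + ket2 j i x) / complex_of_real (sqrt 2)))"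

definition outer :: "((nat \<times> nat) \<Rightarrow> complex) \<Rightarrow> ((nat \<times> nat) \<Rightarrow> complex)
    \<Rightarrow> (nat \<times> nat) \<Rightarrow> (nat \<times> nat) \<Rightarrow> complex" where
  "outer u v = (\<lambda>x y. u x * cnj (v y))"

definition ds_state :: "nat \<Rightarrow> (nat \<Rightarrow> nat \<Rightarrow> real) \<Rightarrow> (nat \<times> nat) \<Rightarrow> (nat \<times> nat) \<Rightarrow> complex" where
  "ds_state d p = (\<lambda>x y. \<Sum>(i, j) \<in> {(i, j). i \<le> j \<and> j < d}.
                      complex_of_real (p i j) * outer (Dket i j) (Dket i j) x y)"

definition ds_weights :: "nat \<Rightarrow> (nat \<Rightarrow> nat \<Rightarrow> real) \<Rightarrow> bool" where
  "ds_weights d p \<longleftrightarrow> (\<forall>i j. i \<le> j \<and> j < d \<longrightarrow> p i j \<ge> 0)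
                      \<and> (\<Sum>(i, j) \<in> {(i, j). i \<le> j \<and> j < d}. p i j) = 1"

definition assoc_matrix :: "(nat \<Rightarrow> nat \<Rightarrow> real) \<Rightarrow> nat \<Rightarrow> nat \<Rightarrow> real" where
  "assoc_matrix p i j = (if i = j then p i i else p (min i j) (max i j) / 2)"

definition partial_transpose :: "((nat \<times> nat) \<Rightarrow> (nat \<times> nat) \<Rightarrow> complex)
    \<Rightarrow> (nat \<times> nat) \<Rightarrow> (nat \<times> nat) \<Rightarrow> complex" where
  "partial_transpose A = (\<lambda>(i, j) (k, l). A (i, l) (k, j))"

definition psd_op :: "nat \<Rightarrow> ((nat \<times> nat) \<Rightarrow> (nat \<times> nat) \<Rightarrow> complex) \<Rightarrow> bool" where
  "psd_op d A \<longleftrightarrow>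
     (\<forall>x\<in>idx d. \<forall>y\<in>idx d. A x y = cnj (A y x)) \<and>
     (\<forall>v :: (nat \<times> nat) \<Rightarrow> complex.
        Re (\<Sum>x\<in>idx d. \<Sum>y\<in>idx d. cnj (v x) * A x y * v y) \<ge> 0)"

definition psd_real :: "nat \<Rightarrow> (nat \<Rightarrow> nat \<Rightarrow> real) \<Rightarrow> bool" where
  "psd_real d A \<longleftrightarrow>
     (\<forall>i<d. \<forall>j<d. A i j = A j i) \<and>
     (\<forall>v :: nat \<Rightarrow> real. (\<Sum>i<d. \<Sum>j<d. v i * A i j * v j) \<ge> 0)"

definition doubly_nonneg :: "nat \<Rightarrow> (nat \<Rightarrow> nat \<Rightarrow> real) \<Rightarrow> bool" where
  "doubly_nonneg d A \<longleftrightarrow> psd_real d A \<and> (\<forall>i<d. \<forall>j<d. A i j \<ge> 0)"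

end

theory Submission
  imports Defs
begin

text \<open>In the computational basis the partial transpose of a DS state splits into two blocks:
  on the span of the vectors |ii> it acts as the associated matrix M, and every |ij> with
  i \<noteq> j is an eigenvector with eigenvalue M_ij. Hence it is positive semidefinite iff M is
  positive semidefinite with non-negative off-diagonal entries, and the diagonal entries of a
  positive semidefinite matrix are non-negative anyway.\<close>

definition block_op :: "(nat \<Rightarrow> nat \<Rightarrow> real) \<Rightarrow> (nat \<times> nat) \<Rightarrow> (nat \<times> nat) \<Rightarrow> complex" where
  "block_op M x y = complex_of_real
     ((if fst x = snd x \<and> fst y = snd y then M (fst x) (fst y) else 0)
      + (if x = y \<and> fst x \<noteq> snd x then M (fst x) (snd x) else 0))"

lemma Dket_nonzero: "i \<le> j \<Longrightarrow> Dket i j (a, b) \<noteq> 0 \<Longrightarrow> i = min a b \<and> j = max a b"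
  unfolding Dket_def ket2_def by (auto simp: min_def max_def split: if_splits)

lemma partial_transpose_ds_state:
  assumes "a < d" "e < d"
  shows "partial_transpose (ds_state d p) (a, b) (c, e) = block_op (assoc_matrix p) (a, b) (c, e)"
proof -
  let ?T = "{(i, j). i \<le> j \<and> j < d}" and ?m = "(min a e, max a e)"
  have "finite ?T"
    by (rule finite_subset[of _ "{..<d} \<times> {..<d}"]) auto
  moreover have "?m \<in> ?T"
    using assms by auto
  ultimately have "(\<Sum>(i, j)\<in>?T. complex_of_real (p i j) * outer (Dket i j) (Dket i j) (a, e) (c, b))
      = (\<Sum>(i, j)\<in>{?m}. complex_of_real (p i j) * outer (Dket i j) (Dket i j) (a, e) (c, b))"
    by (intro sum.mono_neutral_right) (auto simp: outer_def dest: Dket_nonzero)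
  then have "partial_transpose (ds_state d p) (a, b) (c, e)
      = (\<Sum>(i, j)\<in>{?m}. complex_of_real (p i j) * outer (Dket i j) (Dket i j) (a, e) (c, b))"
    by (simp add: partial_transpose_def ds_state_def)
  also have "\<dots> = block_op (assoc_matrix p) (a, b) (c, e)"
    unfolding outer_def Dket_def ket2_def assoc_matrix_def block_op_def
    by (auto simp: min_def max_def field_simps simp flip: of_real_mult)
  finally show ?thesis .
qed

lemma psd_op_cong:
  "(\<And>x y. x \<in> idx d \<Longrightarrow> y \<in> idx d \<Longrightarrow> A x y = B x y) \<Longrightarrow> psd_op d A \<longleftrightarrow> psd_op d B"
  unfolding psd_op_def by (simp cong: sum.cong)

lemma sum_diagonal:
  assumes "finite A"
  shows "(\<Sum>x\<in>A \<times> A. if fst x = snd x then f x else 0) = (\<Sum>a\<in>A. f (a, a))"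
proof -
  have "(\<Sum>x\<in>A \<times> A. if fst x = snd x then f x else 0)
      = (\<Sum>a\<in>A. \<Sum>b\<in>A. if a = b then f (a, b) else 0)"
    by (simp add: sum.cartesian_product')
  then show ?thesis
    using assms by simp
qed

lemma quadratic_form_block_op:
  "(\<Sum>x\<in>idx d. \<Sum>y\<in>idx d. cnj (v x) * block_op M x y * v y)
    = (\<Sum>a<d. \<Sum>c<d. cnj (v (a, a)) * complex_of_real (M a c) * v (c, c))
      + (\<Sum>x\<in>idx d. if fst x \<noteq> snd x then complex_of_real (M (fst x) (snd x)) * cnj (v x) * v x else 0)"
proof -
  have fin: "finite (idx d)"
    by (simp add: idx_def)
  have "(\<Sum>x\<in>idx d. \<Sum>y\<in>idx d. cnj (v x) * block_op M x y * v y)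
      = (\<Sum>x\<in>idx d. if fst x = snd x then \<Sum>y\<in>idx d. if fst y = snd y then
            cnj (v (fst x, fst x)) * complex_of_real (M (fst x) (fst y)) * v (fst y, fst y) else 0 else 0)
        + (\<Sum>x\<in>idx d. if fst x \<noteq> snd x then complex_of_real (M (fst x) (snd x)) * cnj (v x) * v x else 0)"
  proof -
    have "cnj (v x) * block_op M x y * v y
        = (if fst x = snd x then if fst y = snd y then
             cnj (v (fst x, fst x)) * complex_of_real (M (fst x) (fst y)) * v (fst y, fst y) else 0 else 0)
          + (if x = y then if fst x \<noteq> snd x then
             complex_of_real (M (fst x) (snd x)) * cnj (v x) * v x else 0 else 0)" for x y
      unfolding block_op_def by (cases x; cases y) (auto simp: algebra_simps)
    then show ?thesis
      by (simp only: sum.distrib) (auto simp: fin intro!: sum.cong)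
  qed
  also have "\<dots> = (\<Sum>a<d. \<Sum>c<d. cnj (v (a, a)) * complex_of_real (M a c) * v (c, c))
        + (\<Sum>x\<in>idx d. if fst x \<noteq> snd x then complex_of_real (M (fst x) (snd x)) * cnj (v x) * v x else 0)"
    unfolding idx_def atLeast0LessThan by (simp add: sum_diagonal)
  finally show ?thesis .
qed

lemma Re_cnj_quadratic_form:
  fixes u :: "nat \<Rightarrow> complex"
  shows "Re (\<Sum>a<d. \<Sum>c<d. cnj (u a) * complex_of_real (M a c) * u c)
    = (\<Sum>a<d. \<Sum>c<d. Re (u a) * M a c * Re (u c)) + (\<Sum>a<d. \<Sum>c<d. Im (u a) * M a c * Im (u c))"
  by (simp add: Re_sum sum.distrib[symmetric] algebra_simps)

lemma Re_quadratic_form_block_op: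
  "Re (\<Sum>x\<in>idx d. \<Sum>y\<in>idx d. cnj (v x) * block_op M x y * v y)
    = (\<Sum>a<d. \<Sum>c<d. Re (v (a, a)) * M a c * Re (v (c, c)))
      + (\<Sum>a<d. \<Sum>c<d. Im (v (a, a)) * M a c * Im (v (c, c)))
      + (\<Sum>x\<in>idx d. if fst x \<noteq> snd x then M (fst x) (snd x) * (cmod (v x))\<^sup>2 else 0)"
proof -
  have Re_diag_term: "Re (complex_of_real r * cnj z * z) = r * (cmod z)\<^sup>2" for r z
    unfolding cmod_power2 by (simp add: power2_eq_square algebra_simps)
  show ?thesis
    unfolding quadratic_form_block_op plus_complex.sel Re_cnj_quadratic_form
    unfolding Re_sum if_distrib[of Re] Re_diag_term zero_complex.sel ..
qed

lemma psd_real_if_psd_op_block_op: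
  assumes psd: "psd_op d (block_op M)"
  shows "psd_real d M"
  unfolding psd_real_def
proof (intro conjI allI impI)
  fix i j assume "i < d" "j < d"
  then have "(i, i) \<in> idx d" "(j, j) \<in> idx d"
    by (simp_all add: idx_def)
  then have "block_op M (i, i) (j, j) = cnj (block_op M (j, j) (i, i))"
    using psd unfolding psd_op_def by blast
  then show "M i j = M j i"
    by (auto simp: block_op_def)
next
  fix w :: "nat \<Rightarrow> real"
  show "0 \<le> (\<Sum>i<d. \<Sum>j<d. w i * M i j * w j)"
    using psd[unfolded psd_op_def, THEN conjunct2,
        rule_format, of "\<lambda>x. if fst x = snd x then complex_of_real (w (fst x)) else 0"]
    unfolding Re_quadratic_form_block_op by (simp cong: if_cong)
qed

lemma offdiag_nonneg_if_psd_op_block_op: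
  assumes "psd_op d (block_op M)" "i < d" "j < d" "i \<noteq> j"
  shows "0 \<le> M i j"
proof -
  define v :: "nat \<times> nat \<Rightarrow> complex" where "v x = (if x = (i, j) then 1 else 0)" for x
  have diag_0: "v (a, a) = 0" for a
    using assms(4) by (simp add: v_def)
  have "(\<Sum>x\<in>idx d. if fst x \<noteq> snd x then M (fst x) (snd x) * (cmod (v x))\<^sup>2 else 0)
      = (\<Sum>x\<in>idx d. if x = (i, j) then M i j else 0)"
    using assms(4) by (intro sum.cong) (auto simp: v_def)
  also have "\<dots> = M i j"
    using assms(2,3) by (simp add: idx_def)
  finally have offdiag_term: "(\<Sum>x\<in>idx d. if fst x \<noteq> snd x then M (fst x) (snd x) * (cmod (v x))\<^sup>2 else 0) = M i j" .
  have "0 \<le> Re (\<Sum>x\<in>idx d. \<Sum>y\<in>idx d. cnj (v x) * block_op M x y * v y)"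
    using assms(1) unfolding psd_op_def by blast
  then show ?thesis
    unfolding Re_quadratic_form_block_op diag_0 offdiag_term by simp
qed

lemma psd_op_block_op:
  assumes "psd_real d M" and offdiag_nonneg: "\<And>i j. i < d \<Longrightarrow> j < d \<Longrightarrow> i \<noteq> j \<Longrightarrow> 0 \<le> M i j"
  shows "psd_op d (block_op M)"
  unfolding psd_op_def
proof (intro conjI ballI allI)
  have sym: "M i j = M j i" if "i < d" "j < d" for i j
    using assms(1) that unfolding psd_real_def by blast
  fix x y assume "x \<in> idx d" "y \<in> idx d"
  then show "block_op M x y = cnj (block_op M y x)"
    by (cases x; cases y) (auto simp: block_op_def idx_def sym)
next
  fix v :: "nat \<times> nat \<Rightarrow> complex"
  have form_nonneg: "0 \<le> (\<Sum>i<d. \<Sum>j<d. w i * M i j * w j)" for w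
    using assms(1) unfolding psd_real_def by blast
  have "0 \<le> (\<Sum>x\<in>idx d. if fst x \<noteq> snd x then M (fst x) (snd x) * (cmod (v x))\<^sup>2 else 0)"
    by (rule sum_nonneg) (auto simp: idx_def offdiag_nonneg)
  then show "0 \<le> Re (\<Sum>x\<in>idx d. \<Sum>y\<in>idx d. cnj (v x) * block_op M x y * v y)"
    unfolding Re_quadratic_form_block_op
    using form_nonneg[of "\<lambda>a. Re (v (a, a))"] form_nonneg[of "\<lambda>a. Im (v (a, a))"] by linarith
qed

lemma psd_op_block_op_iff:
  "psd_op d (block_op M) \<longleftrightarrow> psd_real d M \<and> (\<forall>i<d. \<forall>j<d. i \<noteq> j \<longrightarrow> 0 \<le> M i j)"
  using psd_real_if_psd_op_block_op offdiag_nonneg_if_psd_op_block_op psd_op_block_op by blast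

lemma psd_real_diag_nonneg:
  assumes "psd_real d M" "i < d"
  shows "0 \<le> M i i"
proof -
  have "0 \<le> (\<Sum>j<d. \<Sum>k<d. w j * M j k * w k)" for w
    using assms(1) unfolding psd_real_def by blast
  from this[of "\<lambda>j. of_bool (j = i)"] show ?thesis
    using assms(2) by (simp add: Int_insert_left if_distrib[of "sum _"] cong: if_cong)
qed

lemma doubly_nonneg_iff_psd_real_offdiag_nonneg:
  "doubly_nonneg d M \<longleftrightarrow> psd_real d M \<and> (\<forall>i<d. \<forall>j<d. i \<noteq> j \<longrightarrow> 0 \<le> M i j)"
  unfolding doubly_nonneg_def by (metis psd_real_diag_nonneg)

theorem theorem2:
  fixes d :: nat and p :: "nat \<Rightarrow> nat \<Rightarrow> real"
  assumes "d \<ge> 2"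
    and "ds_weights d p"
  shows "psd_op d (partial_transpose (ds_state d p)) \<longleftrightarrow> doubly_nonneg d (assoc_matrix p)"
proof -
  have "psd_op d (partial_transpose (ds_state d p)) \<longleftrightarrow> psd_op d (block_op (assoc_matrix p))"
    by (rule psd_op_cong) (auto simp: idx_def partial_transpose_ds_state)
  also have "\<dots> \<longleftrightarrow> doubly_nonneg d (assoc_matrix p)"
    by (simp only: psd_op_block_op_iff doubly_nonneg_iff_psd_real_offdiag_nonneg)
  finally show ?thesis .
qed

end
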